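(* For every $n\ge1$, $\Phi_n(x)$ is a polynomial of degree $n+2$, and \[ \Phi_n(2)=\Phi_n'(2)=0,\qquad \Phi_n(-2)=16(n+1)(-1)^n. \]
   Context: $U_n$ is the Chebyshev polynomial of the second kind, $U_n(\cos\theta)=\sin((n+1)\theta)/\sin\theta$, $\tilde U_n(x)=U_n(x/2)$, and $\Phi_n(x)=((n+1)x^2-6x-4n)\tilde U_n(x)+2(x+2)\tilde U_{n-1}(x)+2(x+2)$. *)

theory Defs
  imports "HOL-Computational_Algebra.Polynomial"
begin

text \<open>Chebyshev polynomials of the second kind, as real polynomials, via the standard
  recurrence U_0 = 1, U_1 = 2x, U_(n+2) = 2x U_(n+1) - U_n
  (equivalently U_n(cos t) = sin((n+1)t)/sin t).\<close>
fun chebU :: "nat \<Rightarrow> real poly" where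
  "chebU 0 = 1"
| "chebU (Suc 0) = [:0, 2:]"
| "chebU (Suc (Suc n)) = [:0, 2:] * chebU (Suc n) - chebU n"

definition chebUt :: "nat \<Rightarrow> real poly" where
  "chebUt n = pcompose (chebU n) [:0, 1/2:]"

definition Phi :: "nat \<Rightarrow> real poly" where
  "Phi n = [:- 4 * real n, -6, real n + 1:] * chebUt n
           + smult 2 [:2, 1:] * chebUt (n - 1) + smult 2 [:2, 1:]"

end

theory Submission
  imports Defs
begin

text \<open>The rescaled polynomials satisfy the recurrence \<open>Ut\<^sub>n\<^sub>+\<^sub>2 = x Ut\<^sub>n\<^sub>+\<^sub>1 - Ut\<^sub>n\<close>,
  so they are monic of degree n, and the values \<open>Ut\<^sub>n(2) = n + 1\<close>,
  \<open>Ut\<^sub>n(-2) = (-1)\<^sup>n (n + 1)\<close> and \<open>Ut\<^sub>n'(2) = n(n+1)(n+2)/6\<close> follow by induction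
  along the recurrence. Writing \<open>\<Phi>\<^sub>n = A Ut\<^sub>n + B\<close> with the quadratic
  \<open>A = (n+1)x\<^sup>2 - 6x - 4n\<close> and \<open>deg B \<le> n + 1\<close> gives the degree; the remaining
  claims are a direct evaluation, using \<open>A(2) = -8\<close>, \<open>A'(2) = 4n - 2\<close> and that
  \<open>B\<close> vanishes at -2.\<close>

lemma chebUt_0: "chebUt 0 = 1"
  by (simp add: chebUt_def one_pCons pcompose_pCons)

lemma chebUt_1: "chebUt (Suc 0) = [:0, 1:]"
  by (simp add: chebUt_def pcompose_pCons)

lemma chebUt_Suc_Suc: "chebUt (Suc (Suc n)) = [:0, 1:] * chebUt (Suc n) - chebUt n"
  by (simp add: chebUt_def pcompose_mult pcompose_diff pcompose_pCons pcompose_smult)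

lemma degree_lead_coeff_chebUt: "degree (chebUt n) = n \<and> lead_coeff (chebUt n) = 1"
proof (induction n rule: chebU.induct)
  case 1
  then show ?case by (simp add: chebUt_0)
next
  case 2
  then show ?case by (simp add: chebUt_1)
next
  case (3 n)
  have deg_Suc: "degree (chebUt (Suc n)) = Suc n" and lc_Suc: "lead_coeff (chebUt (Suc n)) = 1"
    and deg: "degree (chebUt n) = n"
    using "3.IH" by auto
  let ?P = "[:0, 1:] * chebUt (Suc n)"
  have deg_P: "degree ?P = Suc (Suc n)"
    using deg_Suc lc_Suc by (subst degree_mult_eq) auto
  have "degree (?P - chebUt n) = Suc (Suc n)"
    using deg_P deg degree_add_eq_left[of "- chebUt n" ?P] by simp
  moreover have "coeff (chebUt n) (Suc (Suc n)) = 0"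
    using deg by (simp add: coeff_eq_0)
  ultimately show ?case
    using deg_Suc lc_Suc by (simp add: chebUt_Suc_Suc)
qed

lemma degree_chebUt: "degree (chebUt n) = n"
  using degree_lead_coeff_chebUt by blast

lemma poly_chebUt_2: "poly (chebUt n) 2 = real n + 1"
  by (induction n rule: chebU.induct) (simp_all add: chebUt_0 chebUt_1 chebUt_Suc_Suc)

lemma poly_chebUt_minus_2: "poly (chebUt n) (-2) = (-1) ^ n * (real n + 1)"
  by (induction n rule: chebU.induct)
    (simp_all add: chebUt_0 chebUt_1 chebUt_Suc_Suc algebra_simps)

lemma poly_pderiv_chebUt_2:
  "poly (pderiv (chebUt n)) 2 = real n * (real n + 1) * (real n + 2) / 6"
  by (induction n rule: chebU.induct)
    (simp_all add: chebUt_0 chebUt_1 chebUt_Suc_Suc pderiv_mult pderiv_diff pderiv_pCons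
      poly_chebUt_2 algebra_simps divide_simps)

context
  fixes n :: nat
begin

private abbreviation A :: "real poly" where
  "A \<equiv> [:- 4 * real n, -6, real n + 1:]"

private abbreviation B :: "real poly" where
  "B \<equiv> smult 2 [:2, 1:] * chebUt (n - 1) + smult 2 [:2, 1:]"

private lemma Phi_eq: "Phi n = A * chebUt n + B"
  by (simp add: Phi_def)

lemma degree_Phi: "degree (Phi n) = n + 2"
proof -
  have deg_A_Ut: "degree (A * chebUt n) = n + 2"
    by (subst degree_mult_eq) (use degree_lead_coeff_chebUt[of n] in auto)
  have "degree (smult 2 [:2, 1:] * chebUt (n - 1)) \<le> n + 1"
    using degree_mult_le[of "smult 2 [:2, 1:]" "chebUt (n - 1)"]
    by (simp add: degree_chebUt)
  moreover have "degree (smult 2 [:2, 1 :: real:]) \<le> n + 1"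
    by simp
  ultimately have "degree B \<le> n + 1"
    by (meson degree_add_le)
  then show ?thesis
    unfolding Phi_eq using deg_A_Ut by (subst degree_add_eq_left) auto
qed

lemma poly_Phi_minus_2: "poly (Phi n) (-2) = 16 * (real n + 1) * (-1) ^ n"
  using poly_chebUt_minus_2[of n] by (simp add: Phi_eq algebra_simps)

context
  assumes n_pos: "n \<ge> 1"
begin

private lemma poly_B_2: "poly B 2 = 8 * (real n + 1)"
  using n_pos poly_chebUt_2[of "n - 1"] by (simp add: of_nat_diff)

private lemma poly_pderiv_B_2:
  "poly (pderiv B) 2 = 2 * real n + 2 + 4 * (real n - 1) * real n * (real n + 1) / 3"
  using n_pos poly_chebUt_2[of "n - 1"] poly_pderiv_chebUt_2[of "n - 1"]
  by (simp add: pderiv_add pderiv_mult pderiv_pCons pderiv_smult of_nat_diff algebra_simps)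

lemma poly_Phi_2: "poly (Phi n) 2 = 0"
  using poly_chebUt_2[of n] poly_B_2 by (simp add: Phi_eq algebra_simps)

lemma poly_pderiv_Phi_2: "poly (pderiv (Phi n)) 2 = 0"
proof -
  have poly_A_2: "poly A 2 = -8" and poly_pderiv_A_2: "poly (pderiv A) 2 = 4 * real n - 2"
    by (simp_all add: pderiv_pCons algebra_simps)
  \<comment> \<open>\<open>A\<close> and \<open>B\<close> are abbreviations, which plain \<open>simp\<close> would expand and normalise
    past the evaluation lemmas; hence the \<open>simp only\<close> steps.\<close>
  have "pderiv (Phi n) = A * pderiv (chebUt n) + chebUt n * pderiv A + pderiv B"
    by (simp only: Phi_eq pderiv_add[of "A * chebUt n" B] pderiv_mult[of A])
  then have "poly (pderiv (Phi n)) 2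
      = poly A 2 * poly (pderiv (chebUt n)) 2 + poly (chebUt n) 2 * poly (pderiv A) 2
        + poly (pderiv B) 2"
    by (simp only: poly_add poly_mult)
  also have "\<dots> = - 8 * (real n * (real n + 1) * (real n + 2) / 6)
        + (real n + 1) * (4 * real n - 2)
        + (2 * real n + 2 + 4 * (real n - 1) * real n * (real n + 1) / 3)"
    by (simp only: poly_A_2 poly_pderiv_A_2 poly_chebUt_2 poly_pderiv_chebUt_2 poly_pderiv_B_2)
  also have "\<dots> = 0"
    by (simp add: algebra_simps divide_simps)
  finally show ?thesis .
qed

end

end

theorem lemma4p9:
  fixes n :: nat
  assumes "n \<ge> 1"
  shows "degree (Phi n) = n + 2
       \<and> poly (Phi n) 2 = 0
       \<and> poly (pderiv (Phi n)) 2 = 0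
       \<and> poly (Phi n) (-2) = 16 * (real n + 1) * (-1) ^ n"
  using assms degree_Phi poly_Phi_2 poly_pderiv_Phi_2 poly_Phi_minus_2 by blast

end
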